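(* Consider the following two-period model. States $\omega_1,\omega_2\in\{0,1\}$ satisfy $\Pr[\omega_1=1]=\mu_0\in(0,1)$ and $\Pr[\omega_2=\omega\mid\omega_1=\omega]=\rho$ with $\rho\in(1/2,1)$. In each period $t$ a test may be taken at cost $k>0$ to the principal; a test reveals $\omega_t$, and if no test is taken $\omega_t$ is nevertheless revealed (for free) with probability $\pi\in(0,1)$; unrevealed states are recorded as the report $r_t=\varnothing$, and revealed states are recorded truthfully, $r_t=\omega_t$. A (baseline) mechanism consists of $\sigma_1\in\{0,1\}$ (whether to test in period 1), $\sigma_2:\{\varnothing,0,1\}\to\{0,1\}$ (whether to test in period 2 as a function of $r_1$) and $\hat x:\{\varnothing,0,1\}^2\to\{0,1\}$; testing occurs exactly when recommended. The principal solves $$\max_{(\sigma,\hat x)}\ \Pr_\sigma[\hat x(r_1,r_2)=\omega_2]-k\big(\sigma_1+\mathbb{E}_{\sigma_1}[\sigma_2(r_1)]\big),$$ where $\mathbb{E}_{\sigma_1}[\sigma_2(r_1)]=[\sigma_1+(1-\sigma_1)\pi][\mu_0\sigma_2(1)+(1-\mu_0)\sigma_2(0)]+(1-\sigma_1)(1-\pi)\sigma_2(\varnothing)$. Let $\kappa=k/(1-\pi)$ and $\mu_2(\varnothing)=\rho\mu_0+(1-\rho)(1-\mu_0)$. Then an optimal solution pairs the efficient assignment policy $\hat x^*(h_2)=\mathbb{1}[\mu_2(h_2)\ge 1/2]$ (where $\mu_2(h_2)$ is the posterior probability that $\omega_2=1$ given the reports $h_2=(r_1,r_2)$, required on all histories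 occurring with positive probability) with the testing policy $\sigma_1^*=0$ and: (i) if $\kappa\in(0,1-\rho]$: $\sigma_2^*(r_1)=1$ for all $r_1$; (ii) if $\kappa\in(1-\rho,\min\{\mu_2(\varnothing),1-\mu_2(\varnothing)\}]$: $\sigma_2^*(r_1)=\mathbb{1}[r_1=\varnothing]$; (iii) if $\kappa>\min\{\mu_2(\varnothing),1-\mu_2(\varnothing)\}$: $\sigma_2^*(r_1)=0$ for all $r_1$. Moreover, if $\kappa=0$, then always testing is optimal.
   Context: This is the "baseline" problem in which the principal directly controls testing and observes all revealed test results (the agent's incentives are ignored). $\mathbb{1}[\cdot]$ is the indicator function. *)

theory Defs
  imports Complex_Main
begin

text \<open>States are bool (True = 1). Reports are bool option: None = no revelation,
  Some w = revealed state w. Testing decisions are bool (True = test).\<close>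

definition prior :: "real \<Rightarrow> bool \<Rightarrow> real" where
  "prior \<mu>0 w = (if w then \<mu>0 else 1 - \<mu>0)"

definition trans_pr :: "real \<Rightarrow> bool \<Rightarrow> bool \<Rightarrow> real" where
  "trans_pr \<rho> w1 w2 = (if w2 = w1 then \<rho> else 1 - \<rho>)"

definition rep_pr :: "real \<Rightarrow> bool \<Rightarrow> bool \<Rightarrow> bool option \<Rightarrow> real" where
  "rep_pr \<pi> s w r =
     (if s then (if r = Some w then 1 else 0)
      else if r = Some w then \<pi> else if r = None then 1 - \<pi> else 0)"

definition joint :: "real \<Rightarrow> real \<Rightarrow> real \<Rightarrow> bool \<Rightarrow> (bool option \<Rightarrow> bool)
    \<Rightarrow> bool \<Rightarrow> bool \<Rightarrow> bool option \<Rightarrow> bool option \<Rightarrow> real" where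
  "joint \<mu>0 \<rho> \<pi> s1 s2 w1 w2 r1 r2 =
     prior \<mu>0 w1 * trans_pr \<rho> w1 w2 * rep_pr \<pi> s1 w1 r1 * rep_pr \<pi> (s2 r1) w2 r2"

definition prob_correct :: "real \<Rightarrow> real \<Rightarrow> real \<Rightarrow> bool \<Rightarrow> (bool option \<Rightarrow> bool)
    \<Rightarrow> (bool option \<Rightarrow> bool option \<Rightarrow> bool) \<Rightarrow> real" where
  "prob_correct \<mu>0 \<rho> \<pi> s1 s2 x =
     (\<Sum>w1\<in>UNIV. \<Sum>w2\<in>UNIV. \<Sum>r1\<in>UNIV. \<Sum>r2\<in>UNIV.
        joint \<mu>0 \<rho> \<pi> s1 s2 w1 w2 r1 r2 * of_bool (x r1 r2 = w2))"

definition exp_test2 :: "real \<Rightarrow> real \<Rightarrow> bool \<Rightarrow> (bool option \<Rightarrow> bool) \<Rightarrow> real" where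
  "exp_test2 \<mu>0 \<pi> s1 s2 =
     (of_bool s1 + (1 - of_bool s1) * \<pi>) *
       (\<mu>0 * of_bool (s2 (Some True)) + (1 - \<mu>0) * of_bool (s2 (Some False)))
     + (1 - of_bool s1) * (1 - \<pi>) * of_bool (s2 None)"

definition objective :: "real \<Rightarrow> real \<Rightarrow> real \<Rightarrow> real \<Rightarrow> bool \<Rightarrow> (bool option \<Rightarrow> bool)
    \<Rightarrow> (bool option \<Rightarrow> bool option \<Rightarrow> bool) \<Rightarrow> real" where
  "objective \<mu>0 \<rho> \<pi> k s1 s2 x =
     prob_correct \<mu>0 \<rho> \<pi> s1 s2 x - k * (of_bool s1 + exp_test2 \<mu>0 \<pi> s1 s2)"

definition hist_prob :: "real \<Rightarrow> real \<Rightarrow> real \<Rightarrow> bool \<Rightarrow> (bool option \<Rightarrow> bool)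
    \<Rightarrow> bool option \<Rightarrow> bool option \<Rightarrow> real" where
  "hist_prob \<mu>0 \<rho> \<pi> s1 s2 r1 r2 =
     (\<Sum>w1\<in>UNIV. \<Sum>w2\<in>UNIV. joint \<mu>0 \<rho> \<pi> s1 s2 w1 w2 r1 r2)"

definition post2 :: "real \<Rightarrow> real \<Rightarrow> real \<Rightarrow> bool \<Rightarrow> (bool option \<Rightarrow> bool)
    \<Rightarrow> bool option \<Rightarrow> bool option \<Rightarrow> real" where
  "post2 \<mu>0 \<rho> \<pi> s1 s2 r1 r2 =
     (\<Sum>w1\<in>UNIV. joint \<mu>0 \<rho> \<pi> s1 s2 w1 True r1 r2) / hist_prob \<mu>0 \<rho> \<pi> s1 s2 r1 r2"

definition efficient_assign :: "real \<Rightarrow> real \<Rightarrow> real \<Rightarrow> bool \<Rightarrow> (bool option \<Rightarrow> bool)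
    \<Rightarrow> (bool option \<Rightarrow> bool option \<Rightarrow> bool) \<Rightarrow> bool" where
  "efficient_assign \<mu>0 \<rho> \<pi> s1 s2 x =
     (\<forall>r1 r2. hist_prob \<mu>0 \<rho> \<pi> s1 s2 r1 r2 > 0 \<longrightarrow>
        x r1 r2 = (post2 \<mu>0 \<rho> \<pi> s1 s2 r1 r2 \<ge> 1/2))"

definition optimal_mech :: "real \<Rightarrow> real \<Rightarrow> real \<Rightarrow> real \<Rightarrow> bool \<Rightarrow> (bool option \<Rightarrow> bool)
    \<Rightarrow> (bool option \<Rightarrow> bool option \<Rightarrow> bool) \<Rightarrow> bool" where
  "optimal_mech \<mu>0 \<rho> \<pi> k s1 s2 x =
     (\<forall>s1' s2' x'. objective \<mu>0 \<rho> \<pi> k s1' s2' x' \<le> objective \<mu>0 \<rho> \<pi> k s1 s2 x)"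

end

theory Submission
  imports Defs
begin

text \<open>Once the testing policy is fixed, the efficient assignment guesses the more likely
  state after every history, and the objective splits over the period-2 decision nodes.
  At a node where the best uninformed guess of \<omega>2 is right with probability q, testing
  yields 1 - k while not testing yields \<pi> + (1 - \<pi>) q, because \<omega>2 may still be revealed;
  so testing pays exactly when \<kappa> \<le> 1 - q. After a revealed \<omega>1 we have q = \<rho>, after an
  unrevealed one q = max m (1 - m) \<le> \<rho>, which gives the three regimes. A period-1 test costs k
  and can raise the value of a node at most to 1, so it is never worth more than testing \<omega>2
  directly.\<close>

lemma sum_UNIV_bool: "(\<Sum>w\<in>UNIV. f w) = f True + f False"
  by (simp add: UNIV_bool add.commute)

lemma sum_UNIV_bool_option: "(\<Sum>r\<in>UNIV. f r) = f None + f (Some True) + f (Some False)"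
  by (simp add: UNIV_option_conv UNIV_bool add_ac)

lemma le_max_bool:
  fixes f :: "bool \<Rightarrow> 'a::linorder"
  shows "f b \<le> max (f True) (f False)"
  by (cases b) simp_all

lemma sum_max_mult_left:
  fixes c :: "'a::linordered_idom"
  assumes "0 \<le> c"
  shows "(\<Sum>x\<in>A. max (c * f x) (c * g x)) = c * (\<Sum>x\<in>A. max (f x) (g x))"
  using assms by (simp add: sum_distrib_left max_mult_distrib_left)

lemma sum_UNIV_bool_mult_of_bool_eq:
  fixes f :: "bool \<Rightarrow> 'a::semiring_1"
  shows "(\<Sum>w\<in>UNIV. f w * of_bool (b = w)) = f b"
  by (cases b) (simp_all add: sum_UNIV_bool)

definition hist_state_prob :: "real \<Rightarrow> real \<Rightarrow> real \<Rightarrow> bool \<Rightarrow> (bool option \<Rightarrow> bool)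
    \<Rightarrow> bool option \<Rightarrow> bool option \<Rightarrow> bool \<Rightarrow> real" where
  "hist_state_prob \<mu>0 \<rho> \<pi> s1 s2 r1 r2 w2 = (\<Sum>w1\<in>UNIV. joint \<mu>0 \<rho> \<pi> s1 s2 w1 w2 r1 r2)"

lemma prob_correct_eq_sum_hist_state_prob:
  "prob_correct \<mu>0 \<rho> \<pi> s1 s2 x =
     (\<Sum>r1\<in>UNIV. \<Sum>r2\<in>UNIV. hist_state_prob \<mu>0 \<rho> \<pi> s1 s2 r1 r2 (x r1 r2))"
proof -
  have "prob_correct \<mu>0 \<rho> \<pi> s1 s2 x =
     (\<Sum>r1\<in>UNIV. \<Sum>r2\<in>UNIV. \<Sum>w2\<in>UNIV. hist_state_prob \<mu>0 \<rho> \<pi> s1 s2 r1 r2 w2 * of_bool (x r1 r2 = w2))"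
    unfolding prob_correct_def hist_state_prob_def sum_distrib_right
    by (simp add: sum_UNIV_bool sum_UNIV_bool_option algebra_simps)
  then show ?thesis by (simp only: sum_UNIV_bool_mult_of_bool_eq)
qed

lemma hist_state_prob_revealed:
  "hist_state_prob \<mu>0 \<rho> \<pi> s1 s2 (Some w) r2 w2 =
     (if s1 then 1 else \<pi>) * prior \<mu>0 w * (trans_pr \<rho> w w2 * rep_pr \<pi> (s2 (Some w)) w2 r2)"
  by (cases w) (simp_all add: hist_state_prob_def sum_UNIV_bool joint_def rep_pr_def)

lemma hist_state_prob_unrevealed:
  "hist_state_prob \<mu>0 \<rho> \<pi> s1 s2 None r2 w2 =
     (if s1 then 0 else 1 - \<pi>) *
       ((if w2 then \<rho> * \<mu>0 + (1 - \<rho>) * (1 - \<mu>0) else 1 - (\<rho> * \<mu>0 + (1 - \<rho>) * (1 - \<mu>0)))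
        * rep_pr \<pi> (s2 None) w2 r2)"
  by (cases w2) (simp_all add: hist_state_prob_def sum_UNIV_bool joint_def rep_pr_def prior_def
      trans_pr_def algebra_simps)

lemma period2_prior_bounds:
  fixes \<mu>0 \<rho> :: real
  assumes "0 \<le> \<mu>0" "\<mu>0 \<le> 1" "1/2 \<le> \<rho>"
  shows "1 - \<rho> \<le> \<rho> * \<mu>0 + (1 - \<rho>) * (1 - \<mu>0)" "\<rho> * \<mu>0 + (1 - \<rho>) * (1 - \<mu>0) \<le> \<rho>"
proof -
  have "0 \<le> (2 * \<rho> - 1) * \<mu>0" "0 \<le> (2 * \<rho> - 1) * (1 - \<mu>0)"
    using assms by simp_all
  then show "1 - \<rho> \<le> \<rho> * \<mu>0 + (1 - \<rho>) * (1 - \<mu>0)" "\<rho> * \<mu>0 + (1 - \<rho>) * (1 - \<mu>0) \<le> \<rho>"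
    by (simp_all add: algebra_simps)
qed

definition unrevealed_accuracy :: "real \<Rightarrow> real \<Rightarrow> real" where
  "unrevealed_accuracy \<mu>0 \<rho> =
     max (\<rho> * \<mu>0 + (1 - \<rho>) * (1 - \<mu>0)) (1 - (\<rho> * \<mu>0 + (1 - \<rho>) * (1 - \<mu>0)))"

text \<open>Probability of a correct assignment at a period-2 node whose best guess of \<omega>2 from
  the period-1 report alone is right with probability q, given the test decision s.\<close>

definition node_accuracy :: "real \<Rightarrow> real \<Rightarrow> bool \<Rightarrow> real" where
  "node_accuracy \<pi> q s = (if s then 1 else \<pi> + (1 - \<pi>) * q)"

definition node_value :: "real \<Rightarrow> real \<Rightarrow> real \<Rightarrow> bool \<Rightarrow> real" where
  "node_value \<pi> k q s = node_accuracy \<pi> q s - k * of_bool s"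

definition node_best :: "real \<Rightarrow> real \<Rightarrow> real \<Rightarrow> real" where
  "node_best \<pi> k q = max (1 - k) (\<pi> + (1 - \<pi>) * q)"

lemma node_value_le_node_best: "node_value \<pi> k q s \<le> node_best \<pi> k q"
  by (simp add: node_value_def node_accuracy_def node_best_def)

lemma node_value_eq_node_best:
  assumes "\<pi> < 1"
    and "s \<Longrightarrow> k / (1 - \<pi>) \<le> 1 - q" and "\<not> s \<Longrightarrow> 1 - q \<le> k / (1 - \<pi>)"
  shows "node_value \<pi> k q s = node_best \<pi> k q"
proof -
  have pos: "0 < 1 - \<pi>"
    using assms(1) by simp
  have slack: "(1 - q) * (1 - \<pi>) = 1 - (\<pi> + (1 - \<pi>) * q)"
    by (simp add: algebra_simps)
  have "(k / (1 - \<pi>) \<le> 1 - q) = (\<pi> + (1 - \<pi>) * q \<le> 1 - k)"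
    "(1 - q \<le> k / (1 - \<pi>)) = (1 - k \<le> \<pi> + (1 - \<pi>) * q)"
    unfolding pos_divide_le_eq[OF pos] pos_le_divide_eq[OF pos] slack by linarith+
  with assms show ?thesis
    by (cases s) (simp_all add: node_value_def node_accuracy_def node_best_def)
qed

definition max_prob_correct :: "real \<Rightarrow> real \<Rightarrow> real \<Rightarrow> bool \<Rightarrow> (bool option \<Rightarrow> bool) \<Rightarrow> real" where
  "max_prob_correct \<mu>0 \<rho> \<pi> s1 s2 =
     (\<Sum>r1\<in>UNIV. \<Sum>r2\<in>UNIV.
        max (hist_state_prob \<mu>0 \<rho> \<pi> s1 s2 r1 r2 True) (hist_state_prob \<mu>0 \<rho> \<pi> s1 s2 r1 r2 False))"

definition testing_value :: "real \<Rightarrow> real \<Rightarrow> real \<Rightarrow> real \<Rightarrow> bool \<Rightarrow> (bool option \<Rightarrow> bool) \<Rightarrow> real" where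
  "testing_value \<mu>0 \<rho> \<pi> k s1 s2 =
     max_prob_correct \<mu>0 \<rho> \<pi> s1 s2 - k * (of_bool s1 + exp_test2 \<mu>0 \<pi> s1 s2)"

definition optimal_value :: "real \<Rightarrow> real \<Rightarrow> real \<Rightarrow> real \<Rightarrow> real" where
  "optimal_value \<mu>0 \<rho> \<pi> k =
     \<pi> * node_best \<pi> k \<rho> + (1 - \<pi>) * node_best \<pi> k (unrevealed_accuracy \<mu>0 \<rho>)"

locale two_period_model =
  fixes \<mu>0 \<rho> \<pi> :: real
  assumes prior_nonneg: "0 \<le> \<mu>0" and prior_le_one: "\<mu>0 \<le> 1"
    and persistence_ge_half: "1/2 \<le> \<rho>" and persistence_le_one: "\<rho> \<le> 1"
    and reveal_nonneg: "0 \<le> \<pi>" and reveal_le_one: "\<pi> \<le> 1"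
begin

lemma hist_state_prob_nonneg: "0 \<le> hist_state_prob \<mu>0 \<rho> \<pi> s1 s2 r1 r2 w2"
  using prior_nonneg prior_le_one persistence_ge_half persistence_le_one reveal_nonneg reveal_le_one
  by (auto simp: hist_state_prob_def sum_UNIV_bool joint_def prior_def trans_pr_def rep_pr_def)

lemma prob_correct_le_max_prob_correct:
  "prob_correct \<mu>0 \<rho> \<pi> s1 s2 x \<le> max_prob_correct \<mu>0 \<rho> \<pi> s1 s2"
  unfolding prob_correct_eq_sum_hist_state_prob max_prob_correct_def
  by (intro sum_mono le_max_bool)

lemma prob_correct_eq_max_prob_correct:
  assumes "efficient_assign \<mu>0 \<rho> \<pi> s1 s2 x"
  shows "prob_correct \<mu>0 \<rho> \<pi> s1 s2 x = max_prob_correct \<mu>0 \<rho> \<pi> s1 s2"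
  unfolding prob_correct_eq_sum_hist_state_prob max_prob_correct_def
proof (intro sum.cong refl)
  fix r1 r2
  define p where "p w = hist_state_prob \<mu>0 \<rho> \<pi> s1 s2 r1 r2 w" for w
  have hist: "hist_prob \<mu>0 \<rho> \<pi> s1 s2 r1 r2 = p True + p False"
    by (simp add: hist_prob_def p_def hist_state_prob_def sum_UNIV_bool)
  have post: "post2 \<mu>0 \<rho> \<pi> s1 s2 r1 r2 = p True / (p True + p False)"
    by (simp add: post2_def hist p_def hist_state_prob_def)
  have "0 \<le> p True" "0 \<le> p False"
    by (simp_all add: p_def hist_state_prob_nonneg)
  moreover have "0 < p True + p False \<Longrightarrow> x r1 r2 = (p False \<le> p True)"
    using assms by (simp add: efficient_assign_def hist post field_simps)
  ultimately show "p (x r1 r2) = max (p True) (p False)"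
    by (cases "x r1 r2") (fastforce simp: max_def)+
qed

lemma unrevealed_accuracy_le_persistence: "unrevealed_accuracy \<mu>0 \<rho> \<le> \<rho>"
  using period2_prior_bounds[OF prior_nonneg prior_le_one persistence_ge_half]
  by (simp add: unrevealed_accuracy_def)

lemma sum_max_rep_pr_eq_node_accuracy:
  assumes "0 \<le> q" "q \<le> 1"
  shows "(\<Sum>r2\<in>UNIV. max (q * rep_pr \<pi> s True r2) ((1 - q) * rep_pr \<pi> s False r2))
     = node_accuracy \<pi> (max q (1 - q)) s"
proof (cases s)
  case False
  have "0 \<le> q * \<pi>" "0 \<le> (1 - q) * \<pi>"
    using assms reveal_nonneg by simp_all
  then have "(\<Sum>r2\<in>UNIV. max (q * rep_pr \<pi> s True r2) ((1 - q) * rep_pr \<pi> s False r2))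
      = max (q * (1 - \<pi>)) ((1 - q) * (1 - \<pi>)) + q * \<pi> + (1 - q) * \<pi>"
    using False by (simp add: sum_UNIV_bool_option rep_pr_def max_absorb1 max_absorb2)
  also have "max (q * (1 - \<pi>)) ((1 - q) * (1 - \<pi>)) = max q (1 - q) * (1 - \<pi>)"
    using reveal_le_one by (simp add: max_mult_distrib_right)
  finally show ?thesis
    using False by (simp add: node_accuracy_def algebra_simps)
qed (use assms in \<open>simp add: sum_UNIV_bool_option rep_pr_def node_accuracy_def\<close>)

lemma max_prob_correct_revealed_cell:
  "(\<Sum>r2\<in>UNIV. max (hist_state_prob \<mu>0 \<rho> \<pi> s1 s2 (Some w) r2 True)
                     (hist_state_prob \<mu>0 \<rho> \<pi> s1 s2 (Some w) r2 False))
     = (if s1 then 1 else \<pi>) * prior \<mu>0 w * node_accuracy \<pi> \<rho> (s2 (Some w))"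
proof -
  have "0 \<le> (if s1 then 1 else \<pi>) * prior \<mu>0 w"
    using prior_nonneg prior_le_one reveal_nonneg by (simp add: prior_def)
  moreover have "(\<Sum>r2\<in>UNIV. max (trans_pr \<rho> w True * rep_pr \<pi> (s2 (Some w)) True r2)
                                 (trans_pr \<rho> w False * rep_pr \<pi> (s2 (Some w)) False r2))
      = node_accuracy \<pi> \<rho> (s2 (Some w))"
    using sum_max_rep_pr_eq_node_accuracy[of \<rho>] sum_max_rep_pr_eq_node_accuracy[of "1 - \<rho>"]
      persistence_ge_half persistence_le_one
    by (cases w) (simp_all add: trans_pr_def max_absorb1 max_absorb2)
  ultimately show ?thesis
    by (simp add: hist_state_prob_revealed sum_max_mult_left)
qed

lemma max_prob_correct_unrevealed_cell:
  "(\<Sum>r2\<in>UNIV. max (hist_state_prob \<mu>0 \<rho> \<pi> s1 s2 None r2 True)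
                     (hist_state_prob \<mu>0 \<rho> \<pi> s1 s2 None r2 False))
     = (if s1 then 0 else (1 - \<pi>) * node_accuracy \<pi> (unrevealed_accuracy \<mu>0 \<rho>) (s2 None))"
proof -
  define m where "m = \<rho> * \<mu>0 + (1 - \<rho>) * (1 - \<mu>0)"
  have "0 \<le> (if s1 then 0 else 1 - \<pi>)"
    using reveal_le_one by simp
  moreover have "0 \<le> m" "m \<le> 1"
    using period2_prior_bounds[OF prior_nonneg prior_le_one persistence_ge_half] persistence_le_one
    by (simp_all add: m_def)
  ultimately show ?thesis
    using sum_max_rep_pr_eq_node_accuracy[of m "s2 None"]
    by (simp add: hist_state_prob_unrevealed sum_max_mult_left unrevealed_accuracy_def m_def[symmetric])
qed

lemma max_prob_correct_eq:
  "max_prob_correct \<mu>0 \<rho> \<pi> s1 s2 =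
     (if s1 then 1 else \<pi>) *
       (\<mu>0 * node_accuracy \<pi> \<rho> (s2 (Some True)) + (1 - \<mu>0) * node_accuracy \<pi> \<rho> (s2 (Some False)))
     + (if s1 then 0 else (1 - \<pi>) * node_accuracy \<pi> (unrevealed_accuracy \<mu>0 \<rho>) (s2 None))"
  unfolding max_prob_correct_def
  by (subst sum_UNIV_bool_option)
     (simp add: max_prob_correct_revealed_cell max_prob_correct_unrevealed_cell prior_def algebra_simps)

lemma testing_value_no_first_test:
  "testing_value \<mu>0 \<rho> \<pi> k False s2 =
     \<pi> * (\<mu>0 * node_value \<pi> k \<rho> (s2 (Some True)) + (1 - \<mu>0) * node_value \<pi> k \<rho> (s2 (Some False)))
     + (1 - \<pi>) * node_value \<pi> k (unrevealed_accuracy \<mu>0 \<rho>) (s2 None)"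
  by (simp add: testing_value_def max_prob_correct_eq exp_test2_def node_value_def algebra_simps)

lemma testing_value_first_test:
  "testing_value \<mu>0 \<rho> \<pi> k True s2 =
     \<mu>0 * node_value \<pi> k \<rho> (s2 (Some True)) + (1 - \<mu>0) * node_value \<pi> k \<rho> (s2 (Some False)) - k"
  by (simp add: testing_value_def max_prob_correct_eq exp_test2_def node_value_def algebra_simps)

lemma node_best_le_one:
  assumes "0 \<le> k" "q \<le> 1"
  shows "node_best \<pi> k q \<le> 1"
proof -
  have "\<pi> + (1 - \<pi>) * q \<le> \<pi> + (1 - \<pi>) * 1"
    using assms reveal_le_one by (intro add_left_mono mult_left_mono) simp_all
  then show ?thesis
    using assms by (simp add: node_best_def)
qed

lemma testing_value_le_optimal_value:
  assumes "0 \<le> k"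
  shows "testing_value \<mu>0 \<rho> \<pi> k s1 s2 \<le> optimal_value \<mu>0 \<rho> \<pi> k"
proof -
  define a where "a = node_best \<pi> k \<rho>"
  define b where "b = node_best \<pi> k (unrevealed_accuracy \<mu>0 \<rho>)"
  have revealed: "\<mu>0 * node_value \<pi> k \<rho> (s2 (Some True)) + (1 - \<mu>0) * node_value \<pi> k \<rho> (s2 (Some False))
      \<le> a"
  proof -
    have "\<mu>0 * node_value \<pi> k \<rho> (s2 (Some True)) + (1 - \<mu>0) * node_value \<pi> k \<rho> (s2 (Some False))
        \<le> \<mu>0 * a + (1 - \<mu>0) * a"
      unfolding a_def using prior_nonneg prior_le_one
      by (intro add_mono mult_left_mono node_value_le_node_best) simp_all
    then show ?thesis
      by (simp add: algebra_simps)
  qed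
  show ?thesis
  proof (cases s1)
    case False
    have "(1 - \<pi>) * node_value \<pi> k (unrevealed_accuracy \<mu>0 \<rho>) (s2 None) \<le> (1 - \<pi>) * b"
      unfolding b_def using reveal_le_one by (intro mult_left_mono node_value_le_node_best) simp
    moreover have "\<pi> * (\<mu>0 * node_value \<pi> k \<rho> (s2 (Some True))
                       + (1 - \<mu>0) * node_value \<pi> k \<rho> (s2 (Some False))) \<le> \<pi> * a"
      using revealed reveal_nonneg by (rule mult_left_mono)
    ultimately show ?thesis
      using False by (simp add: testing_value_no_first_test optimal_value_def a_def b_def)
  next
    case True
    have "a \<le> 1"
      unfolding a_def using assms persistence_le_one by (rule node_best_le_one)
    moreover have "1 - k \<le> b"
      by (simp add: b_def node_best_def)
    ultimately have "a - k \<le> b"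
      by linarith
    have "testing_value \<mu>0 \<rho> \<pi> k s1 s2 \<le> a - k"
      using revealed True by (simp add: testing_value_first_test)
    also have "\<dots> = \<pi> * (a - k) + (1 - \<pi>) * (a - k)"
      by (simp add: algebra_simps)
    also have "\<dots> \<le> \<pi> * a + (1 - \<pi>) * b"
      using \<open>a - k \<le> b\<close> assms reveal_nonneg reveal_le_one by (intro add_mono mult_left_mono) simp_all
    finally show ?thesis
      by (simp add: optimal_value_def a_def b_def)
  qed
qed

lemma optimal_mech_if_optimal_value:
  assumes "0 \<le> k" "efficient_assign \<mu>0 \<rho> \<pi> s1 s2 x"
    and "testing_value \<mu>0 \<rho> \<pi> k s1 s2 = optimal_value \<mu>0 \<rho> \<pi> k"
  shows "optimal_mech \<mu>0 \<rho> \<pi> k s1 s2 x"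
  unfolding optimal_mech_def
proof (intro allI)
  fix s1' s2' x'
  have "objective \<mu>0 \<rho> \<pi> k s1' s2' x' \<le> testing_value \<mu>0 \<rho> \<pi> k s1' s2'"
    using prob_correct_le_max_prob_correct by (simp add: objective_def testing_value_def)
  also have "\<dots> \<le> optimal_value \<mu>0 \<rho> \<pi> k"
    using assms(1) by (rule testing_value_le_optimal_value)
  also have "\<dots> = objective \<mu>0 \<rho> \<pi> k s1 s2 x"
    using assms(2,3) by (simp add: objective_def testing_value_def prob_correct_eq_max_prob_correct)
  finally show "objective \<mu>0 \<rho> \<pi> k s1' s2' x' \<le> objective \<mu>0 \<rho> \<pi> k s1 s2 x" .
qed

lemma optimal_mech_no_first_test:
  assumes "\<pi> < 1" "0 \<le> k" "efficient_assign \<mu>0 \<rho> \<pi> False s2 x"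
    and "\<And>w. s2 (Some w) \<Longrightarrow> k / (1 - \<pi>) \<le> 1 - \<rho>"
    and "\<And>w. \<not> s2 (Some w) \<Longrightarrow> 1 - \<rho> \<le> k / (1 - \<pi>)"
    and "s2 None \<Longrightarrow> k / (1 - \<pi>) \<le> 1 - unrevealed_accuracy \<mu>0 \<rho>"
    and "\<not> s2 None \<Longrightarrow> 1 - unrevealed_accuracy \<mu>0 \<rho> \<le> k / (1 - \<pi>)"
  shows "optimal_mech \<mu>0 \<rho> \<pi> k False s2 x"
proof (rule optimal_mech_if_optimal_value[OF assms(2,3)])
  have "node_value \<pi> k \<rho> (s2 (Some w)) = node_best \<pi> k \<rho>" for w
    using assms(1,4,5) by (rule node_value_eq_node_best)
  moreover have "node_value \<pi> k (unrevealed_accuracy \<mu>0 \<rho>) (s2 None)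
      = node_best \<pi> k (unrevealed_accuracy \<mu>0 \<rho>)"
    using assms(1,6,7) by (rule node_value_eq_node_best)
  ultimately show "testing_value \<mu>0 \<rho> \<pi> k False s2 = optimal_value \<mu>0 \<rho> \<pi> k"
    by (simp add: testing_value_no_first_test optimal_value_def algebra_simps)
qed

lemma optimal_mech_free_testing:
  assumes "efficient_assign \<mu>0 \<rho> \<pi> s1 (\<lambda>_. True) x"
  shows "optimal_mech \<mu>0 \<rho> \<pi> 0 s1 (\<lambda>_. True) x"
proof (rule optimal_mech_if_optimal_value[OF order_refl assms])
  have "node_best \<pi> 0 q = 1" if "q \<le> 1" for q
    using node_best_le_one[OF order_refl that] by (simp add: node_best_def)
  then have "optimal_value \<mu>0 \<rho> \<pi> 0 = 1"
    using unrevealed_accuracy_le_persistence persistence_le_one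
    by (simp add: optimal_value_def algebra_simps)
  then show "testing_value \<mu>0 \<rho> \<pi> 0 s1 (\<lambda>_. True) = optimal_value \<mu>0 \<rho> \<pi> 0"
    by (cases s1) (simp_all add: testing_value_no_first_test testing_value_first_test
        node_value_def node_accuracy_def algebra_simps)
qed

end

theorem proposition1:
  fixes \<mu>0 \<rho> \<pi> k :: real
  assumes "0 < \<mu>0" "\<mu>0 < 1" "1/2 < \<rho>" "\<rho> < 1" "0 < \<pi>" "\<pi> < 1" "0 \<le> k"
  defines "\<kappa> \<equiv> k / (1 - \<pi>)"
      and "m \<equiv> \<rho> * \<mu>0 + (1 - \<rho>) * (1 - \<mu>0)"
  shows "(0 < \<kappa> \<and> \<kappa> \<le> 1 - \<rho> \<longrightarrow>
            (\<forall>x. efficient_assign \<mu>0 \<rho> \<pi> False (\<lambda>_. True) x \<longrightarrow>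
                 optimal_mech \<mu>0 \<rho> \<pi> k False (\<lambda>_. True) x))
       \<and> (1 - \<rho> < \<kappa> \<and> \<kappa> \<le> min m (1 - m) \<longrightarrow>
            (\<forall>x. efficient_assign \<mu>0 \<rho> \<pi> False (\<lambda>r. r = None) x \<longrightarrow>
                 optimal_mech \<mu>0 \<rho> \<pi> k False (\<lambda>r. r = None) x))
       \<and> (min m (1 - m) < \<kappa> \<longrightarrow>
            (\<forall>x. efficient_assign \<mu>0 \<rho> \<pi> False (\<lambda>_. False) x \<longrightarrow>
                 optimal_mech \<mu>0 \<rho> \<pi> k False (\<lambda>_. False) x))
       \<and> (\<kappa> = 0 \<longrightarrow>
            (\<forall>x. efficient_assign \<mu>0 \<rho> \<pi> True (\<lambda>_. True) x \<longrightarrow>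
                 optimal_mech \<mu>0 \<rho> \<pi> k True (\<lambda>_. True) x))"
proof -
  interpret two_period_model \<mu>0 \<rho> \<pi>
    using assms(1-6) by unfold_locales simp_all
  have min_eq: "min m (1 - m) = 1 - unrevealed_accuracy \<mu>0 \<rho>"
    by (simp add: unrevealed_accuracy_def m_def min_def max_def)
  have bounds: "1 - \<rho> \<le> min m (1 - m)"
    using period2_prior_bounds[of \<mu>0 \<rho>] assms(1-3) by (simp add: m_def)
  have free: "k = 0" if "\<kappa> = 0"
    using that assms(6) by (simp add: \<kappa>_def)
  note no_first_test = optimal_mech_no_first_test[OF assms(6,7), folded \<kappa>_def min_eq]
  show ?thesis
  proof (intro conjI impI allI)
    fix x
    show "optimal_mech \<mu>0 \<rho> \<pi> k False (\<lambda>_. True) x"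
      if "0 < \<kappa> \<and> \<kappa> \<le> 1 - \<rho>" "efficient_assign \<mu>0 \<rho> \<pi> False (\<lambda>_. True) x"
      using that bounds by (intro no_first_test) auto
    show "optimal_mech \<mu>0 \<rho> \<pi> k False (\<lambda>r. r = None) x"
      if "1 - \<rho> < \<kappa> \<and> \<kappa> \<le> min m (1 - m)" "efficient_assign \<mu>0 \<rho> \<pi> False (\<lambda>r. r = None) x"
      using that by (intro no_first_test) auto
    show "optimal_mech \<mu>0 \<rho> \<pi> k False (\<lambda>_. False) x"
      if "min m (1 - m) < \<kappa>" "efficient_assign \<mu>0 \<rho> \<pi> False (\<lambda>_. False) x"
      using that bounds by (intro no_first_test) auto
    show "optimal_mech \<mu>0 \<rho> \<pi> k True (\<lambda>_. True) x"
      if "\<kappa> = 0" "efficient_assign \<mu>0 \<rho> \<pi> True (\<lambda>_. True) x"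
      using that free optimal_mech_free_testing by simp
  qed
qed

end
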